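(* Let $\rho^A$ be a quantum state on a finite-dimensional system $A$ of dimension $d_A$, and let $\varepsilon\in[0,1]$. Then \[ \kappa_{3\sqrt{\varepsilon}}(\rho^A)\ \ge\ \log d_A-\widetilde{H}_{\max}^{\varepsilon}(A)_{\rho^A}. \]
   Context: All logarithms are base 2; whenever a quantity expresses a number of bits/qubits, a dimension, or a support size, the appropriate floor or ceiling is implicitly taken. Smoothed support max-entropy: given $\rho^A$ and $\varepsilon\ge 0$, let $\rho'^A\le\rho^A$ be the operator obtained from the spectral decomposition of $\rho^A$ by zeroing out the smallest eigenvalues whose sum is at most $\varepsilon$; then $\widetilde{H}_{\max}^{\varepsilon}(A)_{\rho}:=\log|\operatorname{supp}(\rho')|$ (log of the rank of $\rho'$). A purity concentration $\varepsilon$-code for $\rho^A$ consists of an ancilla system $C$ of dimension $d_C$ and a unitary $U^{AC\to A_pA_g}$ (with $A\otimes C\cong A_p\otimes A_g$) such that $\big\|\operatorname{Tr}_{A_g}[U(\rho^A\otimes|0\rangle\langle 0|^C)U^\dagger]-|0\rangle\langle0|^{A_p}\big\|_1\le\varepsilon$; its rate is $\log d_{A_p}-\log d_C$. A rate is $\varepsilon$-achievable if some purity concentration $\varepsilon$-code has that rate, and $\kappa_\varepsilon(\rho^A)$ (the $\varepsilon$-purity) is the supremum of $\varepsilon$-achievable rates. *)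

theory Defs
  imports "Jordan_Normal_Form.Schur_Decomposition" "Jordan_Normal_Form.DL_Rank"
begin

(* Complex d x d matrices represent operators on a d-dimensional Hilbert space.
   Composite systems X \<otimes> Y with dims dX, dY are indexed by x * dY + y. *)

definition mtrace :: "complex mat \<Rightarrow> complex" where
  "mtrace M = (\<Sum>i<dim_row M. M $$ (i, i))"

definition unitary_mat :: "nat \<Rightarrow> complex mat \<Rightarrow> bool" where
  "unitary_mat n U \<longleftrightarrow> U \<in> carrier_mat n n \<and> mat_adjoint U * U = 1\<^sub>m n \<and> U * mat_adjoint U = 1\<^sub>m n"

definition hermitian_mat :: "nat \<Rightarrow> complex mat \<Rightarrow> bool" where
  "hermitian_mat n M \<longleftrightarrow> M \<in> carrier_mat n n \<and> mat_adjoint M = M"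

definition psd_mat :: "nat \<Rightarrow> complex mat \<Rightarrow> bool" where
  "psd_mat n M \<longleftrightarrow> hermitian_mat n M \<and>
     (\<forall>v \<in> carrier_vec n. \<exists>r::real. r \<ge> 0 \<and> (M *\<^sub>v v) \<bullet>c v = complex_of_real r)"

definition density_mat :: "nat \<Rightarrow> complex mat \<Rightarrow> bool" where
  "density_mat d \<rho> \<longleftrightarrow> psd_mat d \<rho> \<and> mtrace \<rho> = 1"

definition diag_real :: "real list \<Rightarrow> complex mat" where
  "diag_real ls = mat (length ls) (length ls) (\<lambda>(i, j). if i = j then complex_of_real (ls ! i) else 0)"

definition spectral_decomp :: "nat \<Rightarrow> complex mat \<Rightarrow> complex mat \<Rightarrow> real list \<Rightarrow> bool" where
  "spectral_decomp d \<rho> U ls \<longleftrightarrow> unitary_mat d U \<and> length ls = d \<and> sorted ls \<and>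
     \<rho> = U * diag_real ls * mat_adjoint U"

definition num_zeroed :: "real \<Rightarrow> real list \<Rightarrow> nat" where
  "num_zeroed eps ls = (GREATEST m. m \<le> length ls \<and> sum_list (take m ls) \<le> eps)"

definition smoothed_op :: "nat \<Rightarrow> real \<Rightarrow> complex mat \<Rightarrow> complex mat" where
  "smoothed_op d eps \<rho> = (SOME \<rho>'. \<exists>U ls. spectral_decomp d \<rho> U ls \<and>
      \<rho>' = U * diag_real (map (\<lambda>i. if i < num_zeroed eps ls then 0 else ls ! i) [0..<d]) * mat_adjoint U)"

definition Hmax_supp :: "nat \<Rightarrow> real \<Rightarrow> complex mat \<Rightarrow> real" where
  "Hmax_supp d eps \<rho> = log 2 (real (vec_space.rank d (smoothed_op d eps \<rho>)))"

(* trace norm ||X||_1 = Tr sqrt(X^dagger X), sqrt the (unique) PSD square root *)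
definition trace_norm :: "nat \<Rightarrow> complex mat \<Rightarrow> real" where
  "trace_norm n X = Re (mtrace (THE R. psd_mat n R \<and> R * R = mat_adjoint X * X))"

definition tensor_mat :: "complex mat \<Rightarrow> complex mat \<Rightarrow> complex mat" where
  "tensor_mat M N = mat (dim_row M * dim_row N) (dim_col M * dim_col N)
     (\<lambda>(i, j). M $$ (i div dim_row N, j div dim_col N) * N $$ (i mod dim_row N, j mod dim_col N))"

definition ket0bra0 :: "nat \<Rightarrow> complex mat" where
  "ket0bra0 d = mat d d (\<lambda>(i, j). if i = 0 \<and> j = 0 then 1 else 0)"

definition ptrace2 :: "nat \<Rightarrow> nat \<Rightarrow> complex mat \<Rightarrow> complex mat" where
  "ptrace2 dX dY M = mat dX dX (\<lambda>(i, j). \<Sum>k<dY. M $$ (i * dY + k, j * dY + k))"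

(* purity concentration eps-code for rho (on A, dim dA) with ancilla dim dC, unitary U,
   and output A_p \<otimes> A_g with dims dP, dG, dP * dG = dA * dC *)
definition pc_code :: "nat \<Rightarrow> complex mat \<Rightarrow> real \<Rightarrow> nat \<Rightarrow> nat \<Rightarrow> nat \<Rightarrow> complex mat \<Rightarrow> bool" where
  "pc_code dA \<rho> eps dC dP dG U \<longleftrightarrow> 0 < dC \<and> 0 < dP \<and> 0 < dG \<and> dP * dG = dA * dC \<and>
     unitary_mat (dA * dC) U \<and>
     trace_norm dP (ptrace2 dP dG (U * tensor_mat \<rho> (ket0bra0 dC) * mat_adjoint U) - ket0bra0 dP) \<le> eps"

definition achievable :: "nat \<Rightarrow> complex mat \<Rightarrow> real \<Rightarrow> real \<Rightarrow> bool" where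
  "achievable dA \<rho> eps r \<longleftrightarrow> (\<exists>dC dP dG U. pc_code dA \<rho> eps dC dP dG U \<and> r = log 2 dP - log 2 dC)"

definition purity :: "nat \<Rightarrow> real \<Rightarrow> complex mat \<Rightarrow> real" where
  "purity dA eps \<rho> = Sup {r. achievable dA \<rho> eps r}"

end

theory Submission
  imports Defs
begin

(* Diagonalize rho = V diag(lambda) V^H with the eigenvalues sorted increasingly, and let m be
   the number of eigenvalues removed by the smoothing: lambda_0 + ... + lambda_(m-1) <= eps, and
   the remaining d - m eigenvalues are positive, so the smoothed operator has rank >= d - m.
   Take an ancilla C of dimension c = max (d - m) 1.  Rotating A into the eigenbasis and then
   permuting the computational basis of A (x) C so that the eigenvectors of the d - m largest
   eigenvalues, tensored with |0>, land in |0> (x) A_g, gives an output whose marginal on A_p is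
   diagonal with weight at least 1 - eps on |0>.  Its trace distance to |0><0| is therefore at
   most 2 eps <= 3 sqrt eps, and the rate is log d - log c >= log d - Hmax^eps. *)

lemma sum_lessThan_add_split:
  "(\<Sum>x<k + c. f x) = (\<Sum>x<k. f x) + (\<Sum>b<c. f (k + b))" for f :: "nat \<Rightarrow> 'a::comm_monoid_add"
  by (induction c) (auto simp: add.commute add.left_commute)

lemma sum_lessThan_mult_split:
  "(\<Sum>x<k * c. f x) = (\<Sum>a<k. \<Sum>b<c. f (a * c + b))" for f :: "nat \<Rightarrow> 'a::comm_monoid_add"
proof (induction k)
  case (Suc k)
  have "(\<Sum>x<Suc k * c. f x) = (\<Sum>x<k * c + c. f x)" by (simp add: add.commute)
  then show ?case using Suc by (simp add: sum_lessThan_add_split)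
qed simp

lemma mult_add_less_mult: "a < k \<Longrightarrow> b < c \<Longrightarrow> a * c + b < k * (c :: nat)"
proof -
  assume "a < k" "b < c"
  then have "a * c + b < Suc a * c" by simp
  also have "\<dots> \<le> k * c" using \<open>a < k\<close> by (intro mult_le_mono1) simp
  finally show ?thesis .
qed

lemma div_mod_less_mult:
  assumes "x < k * (c :: nat)"
  shows "x div c < k" "x mod c < c"
proof -
  have "0 < c" using assms by (cases c) auto
  then show "x div c < k" "x mod c < c"
    using assms by (simp_all add: less_mult_imp_div_less)
qed

section \<open>Adjoints and unitary matrices\<close>

lemma index_mult_mat_sum:
  "A \<in> carrier_mat n k \<Longrightarrow> B \<in> carrier_mat k m \<Longrightarrow> i < n \<Longrightarrow> j < m \<Longrightarrow>
   (A * B) $$ (i, j) = (\<Sum>l<k. A $$ (i, l) * B $$ (l, j))"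
  by (auto simp: scalar_prod_def lessThan_atLeast0 intro!: sum.cong)

lemma cscalar_prod_sum:
  "v \<in> carrier_vec n \<Longrightarrow> w \<in> carrier_vec n \<Longrightarrow> v \<bullet>c w = (\<Sum>k<n. v $ k * cnj (w $ k))"
  unfolding scalar_prod_def by (auto simp: lessThan_atLeast0 intro!: sum.cong)

lemma cscalar_prod_self_pos:
  fixes v :: "complex vec"
  assumes "v \<in> carrier_vec n" "v \<noteq> 0\<^sub>v n"
  shows "\<exists>r > 0. v \<bullet>c v = complex_of_real (r\<^sup>2)"
proof -
  have "v \<bullet>c v > 0" using assms by simp
  then show ?thesis
    by (intro exI[of _ "sqrt (Re (v \<bullet>c v))"]) (auto simp: less_complex_def complex_eq_iff)
qed

lemma mat_adjoint_dim [simp]: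
  "dim_row (mat_adjoint A) = dim_col A" "dim_col (mat_adjoint A) = dim_row A"
  unfolding mat_adjoint_def by auto

lemma index_mat_adjoint [simp]:
  "i < dim_col A \<Longrightarrow> j < dim_row A \<Longrightarrow> mat_adjoint A $$ (i, j) = cnj (A $$ (j, i))"
  for A :: "complex mat"
  unfolding mat_adjoint_def by (simp add: mat_of_rows_def)

lemma mat_adjoint_carrier [simp]: "A \<in> carrier_mat n m \<Longrightarrow> mat_adjoint A \<in> carrier_mat m n"
  unfolding carrier_mat_def by simp

lemma mat_adjoint_adjoint [simp]: "mat_adjoint (mat_adjoint A) = (A :: complex mat)"
  by (rule eq_matI) simp_all

lemma mat_adjoint_one [simp]: "mat_adjoint (1\<^sub>m n) = (1\<^sub>m n :: complex mat)"
  by (rule eq_matI) simp_all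

lemma mat_adjoint_mult:
  assumes "A \<in> carrier_mat n k" "B \<in> carrier_mat k m"
  shows "mat_adjoint (A * B) = mat_adjoint B * mat_adjoint (A :: complex mat)"
proof (rule eq_matI)
  fix i j assume "i < dim_row (mat_adjoint B * mat_adjoint A)" "j < dim_col (mat_adjoint B * mat_adjoint A)"
  with assms have i: "i < m" and j: "j < n" by auto
  have "mat_adjoint (A * B) $$ (i, j) = cnj (\<Sum>l<k. A $$ (j, l) * B $$ (l, i))"
    using assms i j by (simp add: index_mult_mat_sum[OF assms j i] del: index_mult_mat(1))
  also have "\<dots> = (mat_adjoint B * mat_adjoint A) $$ (i, j)"
    using assms i j
    by (simp add: index_mult_mat_sum[of _ m k _ n] cnj_sum mult.commute del: index_mult_mat(1))
  finally show "mat_adjoint (A * B) $$ (i, j) = (mat_adjoint B * mat_adjoint A) $$ (i, j)" .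
qed (use assms in auto)

lemma hermitian_mat_conj:
  assumes "hermitian_mat n A" "W \<in> carrier_mat n m"
  shows "hermitian_mat m (mat_adjoint W * A * W)"
proof -
  have A: "A \<in> carrier_mat n n" "mat_adjoint A = A" using assms(1) unfolding hermitian_mat_def by auto
  have WA: "mat_adjoint W * A \<in> carrier_mat m n"
    using mult_carrier_mat[OF mat_adjoint_carrier[OF assms(2)] A(1)] .
  have "mat_adjoint (mat_adjoint W * A * W) = mat_adjoint W * mat_adjoint (mat_adjoint W * A)"
    by (rule mat_adjoint_mult[OF WA assms(2)])
  also have "\<dots> = mat_adjoint W * A * W"
    using A assms(2) by (simp add: mat_adjoint_mult[of _ m n _ n] assoc_mult_mat[of _ m n _ n _ m])
  finally show ?thesis using mult_carrier_mat[OF WA assms(2)] unfolding hermitian_mat_def by blast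
qed

lemma unitary_matD:
  assumes "unitary_mat n U"
  shows unitary_mat_carrier: "U \<in> carrier_mat n n"
    and unitary_mat_adjoint_mult: "mat_adjoint U * U = 1\<^sub>m n"
    and unitary_mat_mult_adjoint: "U * mat_adjoint U = 1\<^sub>m n"
  using assms unfolding unitary_mat_def by auto

lemma unitary_mat_cancel:
  assumes "unitary_mat n U" "X \<in> carrier_mat n k"
  shows "U * (mat_adjoint U * X) = X" "mat_adjoint U * (U * X) = X"
proof -
  have U: "U \<in> carrier_mat n n" by (rule unitary_matD[OF assms(1)])
  show "U * (mat_adjoint U * X) = X"
    using assoc_mult_mat[OF U mat_adjoint_carrier[OF U] assms(2)] unitary_matD[OF assms(1)] assms(2)
    by simp
  show "mat_adjoint U * (U * X) = X"
    using assoc_mult_mat[OF mat_adjoint_carrier[OF U] U assms(2)] unitary_matD[OF assms(1)] assms(2)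
    by simp
qed

lemma unitary_matI:
  assumes "U \<in> carrier_mat n n" "mat_adjoint U * U = 1\<^sub>m n"
  shows "unitary_mat n U"
  using mat_mult_left_right_inverse[OF mat_adjoint_carrier[OF assms(1)] assms(1,2)] assms
  unfolding unitary_mat_def by simp

lemma unitary_matI_cols:
  assumes U: "U \<in> carrier_mat n n"
    and orth: "\<And>i j. i < n \<Longrightarrow> j < n \<Longrightarrow> col U j \<bullet>c col U i = (if i = j then 1 else 0)"
  shows "unitary_mat n U"
proof (rule unitary_matI[OF U], rule eq_matI)
  fix i j assume "i < dim_row (1\<^sub>m n)" "j < dim_col (1\<^sub>m n)"
  then have i: "i < n" and j: "j < n" by auto
  have "(mat_adjoint U * U) $$ (i, j) = col U j \<bullet>c col U i"
    using U i j by (simp add: index_mult_mat_sum[of _ n n _ n] cscalar_prod_sum[of _ n] mult.commute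
        del: index_mult_mat(1))
  then show "(mat_adjoint U * U) $$ (i, j) = 1\<^sub>m n $$ (i, j)" using orth[OF i j] i j by simp
qed (use U in auto)

lemma unitary_mat_col_cscalar:
  assumes "unitary_mat n U" "i < n" "j < n"
  shows "col U j \<bullet>c col U i = (if i = j then 1 else 0)"
proof -
  have U: "U \<in> carrier_mat n n" by (rule unitary_matD[OF assms(1)])
  have "col U j \<bullet>c col U i = (mat_adjoint U * U) $$ (i, j)"
    using U assms(2,3) by (simp add: index_mult_mat_sum[of _ n n _ n] cscalar_prod_sum[of _ n] mult.commute
        del: index_mult_mat(1))
  then show ?thesis using unitary_matD(2)[OF assms(1)] assms(2,3) by simp
qed

lemma unitary_mat_one: "unitary_mat n (1\<^sub>m n)"
  unfolding unitary_mat_def by simp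

lemma unitary_mat_mult:
  assumes U: "unitary_mat n U" and V: "unitary_mat n V"
  shows "unitary_mat n (U * V)"
proof (rule unitary_matI)
  have Uc: "U \<in> carrier_mat n n" and Vc: "V \<in> carrier_mat n n"
    using U V by (simp_all add: unitary_mat_carrier)
  then show "U * V \<in> carrier_mat n n" by simp
  show "mat_adjoint (U * V) * (U * V) = 1\<^sub>m n"
    using Uc Vc unitary_mat_cancel(2)[OF U, of V] unitary_matD(2)[OF V]
    by (simp add: mat_adjoint_mult[OF Uc Vc] assoc_mult_mat[of _ n n _ n _ n])
qed

lemma unitary_mat_adjoint:
  assumes "unitary_mat n U"
  shows "unitary_mat n (mat_adjoint U)"
  using unitary_matD[OF assms] unfolding unitary_mat_def by simp

lemma unitary_mat_of_corthogonal:
  fixes ws :: "complex vec list"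
  assumes ws: "corthogonal ws" "set ws \<subseteq> carrier_vec n" "length ws = n"
  shows "\<exists>W nrm. unitary_mat n W \<and> (\<forall>i < n. 0 < nrm i \<and>
    ws ! i \<bullet>c ws ! i = complex_of_real ((nrm i)\<^sup>2) \<and> col W i = (1 / complex_of_real (nrm i)) \<cdot>\<^sub>v ws ! i)"
proof -
  have wsi: "ws ! i \<in> carrier_vec n" if "i < n" for i using ws that by auto
  have "\<forall>i < n. \<exists>r > 0. ws ! i \<bullet>c ws ! i = complex_of_real (r\<^sup>2)"
  proof (intro allI impI cscalar_prod_self_pos[OF wsi])
    fix i assume "i < n"
    then show "ws ! i \<noteq> 0\<^sub>v n" using corthogonalD[OF ws(1), of i i] ws(3) by auto
  qed
  then obtain nrm where sq: "\<And>i. i < n \<Longrightarrow> 0 < nrm i \<and> ws ! i \<bullet>c ws ! i = complex_of_real ((nrm i)\<^sup>2)"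
    by metis
  define W where "W = mat n n (\<lambda>(k, i). ws ! i $ k / complex_of_real (nrm i))"
  have colW: "col W i = (1 / complex_of_real (nrm i)) \<cdot>\<^sub>v ws ! i" if "i < n" for i
    using that wsi[OF that] by (intro eq_vecI) (auto simp: W_def)
  have "unitary_mat n W"
  proof (rule unitary_matI_cols)
    fix i j assume i: "i < n" and j: "j < n"
    have "col W j \<bullet>c col W i = (ws ! j \<bullet>c ws ! i) / complex_of_real (nrm i * nrm j)"
      using wsi[OF i] wsi[OF j] by (simp add: colW i j conjugate_smult_vec)
    then show "col W j \<bullet>c col W i = (if i = j then 1 else 0)"
      using sq[OF i] corthogonalD[OF ws(1), of j i] i j ws(3) by (auto simp: power2_eq_square)
  qed (simp add: W_def)
  then show ?thesis using sq colW by blast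
qed

lemma unitary_mat_extend:
  fixes u :: "complex vec"
  assumes u: "u \<in> carrier_vec n" and unit: "u \<bullet>c u = 1"
  shows "\<exists>W. unitary_mat n W \<and> col W 0 = u"
proof -
  interpret cof_vec_space n "TYPE(complex)" .
  have u0: "u \<noteq> 0\<^sub>v n" using unit u by auto
  then have n: "0 < n" using u by (cases n) auto
  obtain b where b: "set b \<subseteq> carrier_vec n" "distinct b" "\<not> lin_dep (set b)" "length b = n" "hd b = u"
    using basis_completion[OF u u0] by blast
  then obtain bs where bu: "b = u # bs" using n by (cases b) auto
  define ws where "ws = gram_schmidt n b"
  have ws: "corthogonal ws" "set ws \<subseteq> carrier_vec n" "length ws = n"
    using gram_schmidt_result[OF b(1-3) ws_def] b(4) by auto
  have ws0: "ws ! 0 = u"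
    using gram_schmidt_hd[OF u, of bs] ws(3) n unfolding ws_def bu by (cases "gram_schmidt n (u # bs)") auto
  obtain W nrm where W: "unitary_mat n W" and nrm: "\<forall>i < n. 0 < nrm i \<and>
    ws ! i \<bullet>c ws ! i = complex_of_real ((nrm i)\<^sup>2) \<and> col W i = (1 / complex_of_real (nrm i)) \<cdot>\<^sub>v ws ! i"
    using unitary_mat_of_corthogonal[OF ws] by blast
  note nrm0 = nrm[rule_format, OF n]
  have "complex_of_real ((nrm 0)\<^sup>2) = 1" using nrm0 unit ws0 by simp
  then have "(nrm 0)\<^sup>2 = 1" by (simp only: of_real_eq_1_iff)
  then have "nrm 0 = 1" using nrm0 by (simp add: power2_eq_1_iff)
  then show ?thesis using W nrm0 ws0 u by auto
qed

section \<open>Real diagonal matrices and their unitary conjugates\<close>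

definition real_diag_mat :: "nat \<Rightarrow> (nat \<Rightarrow> real) \<Rightarrow> complex mat" where
  "real_diag_mat n f = mat n n (\<lambda>(i, j). if i = j then complex_of_real (f i) else 0)"

lemma real_diag_mat_carrier [simp]: "real_diag_mat n f \<in> carrier_mat n n"
  and real_diag_mat_dim [simp]: "dim_row (real_diag_mat n f) = n" "dim_col (real_diag_mat n f) = n"
  and index_real_diag_mat [simp]: "i < n \<Longrightarrow> j < n \<Longrightarrow>
    real_diag_mat n f $$ (i, j) = (if i = j then complex_of_real (f i) else 0)"
  unfolding real_diag_mat_def by auto

lemma real_diag_mat_cong: "(\<And>i. i < n \<Longrightarrow> f i = g i) \<Longrightarrow> real_diag_mat n f = real_diag_mat n g"
  unfolding real_diag_mat_def by (rule eq_matI) auto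

lemma diag_real_eq_real_diag_mat: "diag_real ls = real_diag_mat (length ls) (nth ls)"
  unfolding diag_real_def real_diag_mat_def ..

lemma ket0bra0_eq_real_diag_mat: "ket0bra0 n = real_diag_mat n (\<lambda>i. if i = 0 then 1 else 0)"
  unfolding ket0bra0_def real_diag_mat_def by (rule eq_matI) auto

lemma mat_adjoint_real_diag_mat [simp]: "mat_adjoint (real_diag_mat n f) = real_diag_mat n f"
  by (rule eq_matI) auto

lemma index_mult_real_diag_mat:
  assumes "dim_col M = n" "a < dim_row M" "b < n"
  shows "(M * real_diag_mat n f) $$ (a, b) = M $$ (a, b) * complex_of_real (f b)"
proof -
  have "(M * real_diag_mat n f) $$ (a, b) = (\<Sum>l<n. M $$ (a, l) * real_diag_mat n f $$ (l, b))"
    using assms by (intro index_mult_mat_sum[of _ "dim_row M" n _ n] carrier_matI) auto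
  also have "\<dots> = (\<Sum>l<n. if l = b then M $$ (a, b) * complex_of_real (f b) else 0)"
    using assms(3) by (intro sum.cong) auto
  finally show ?thesis using assms(3) by simp
qed

lemma index_real_diag_mat_mult:
  assumes "dim_row M = n" "a < n" "b < dim_col M"
  shows "(real_diag_mat n f * M) $$ (a, b) = complex_of_real (f a) * M $$ (a, b)"
proof -
  have "(real_diag_mat n f * M) $$ (a, b) = (\<Sum>l<n. real_diag_mat n f $$ (a, l) * M $$ (l, b))"
    using assms by (intro index_mult_mat_sum[of _ n n _ "dim_col M"] carrier_matI) auto
  also have "\<dots> = (\<Sum>l<n. if l = a then complex_of_real (f a) * M $$ (a, b) else 0)"
    using assms(2) by (intro sum.cong) auto
  finally show ?thesis using assms(2) by simp
qed

lemma real_diag_mat_mult: "real_diag_mat n f * real_diag_mat n g = real_diag_mat n (\<lambda>i. f i * g i)"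
  by (rule eq_matI) (simp_all add: index_mult_real_diag_mat del: index_mult_mat(1))

lemma real_diag_mat_add: "real_diag_mat n f + real_diag_mat n g = real_diag_mat n (\<lambda>i. f i + g i)"
  by (rule eq_matI) auto

lemma conj_real_diag_mat_carrier:
  "U \<in> carrier_mat n n \<Longrightarrow> U * real_diag_mat n f * mat_adjoint U \<in> carrier_mat n n"
  using mult_carrier_mat[OF mult_carrier_mat[OF _ real_diag_mat_carrier] mat_adjoint_carrier] .

lemma index_conj_real_diag_mat:
  assumes "U \<in> carrier_mat n n" "a < n" "b < n"
  shows "(U * real_diag_mat n f * mat_adjoint U) $$ (a, b) =
    (\<Sum>k<n. U $$ (a, k) * complex_of_real (f k) * cnj (U $$ (b, k)))"
proof -
  have "(U * real_diag_mat n f * mat_adjoint U) $$ (a, b) =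
    (\<Sum>k<n. (U * real_diag_mat n f) $$ (a, k) * mat_adjoint U $$ (k, b))"
    using assms by (intro index_mult_mat_sum[of _ n n _ n]) auto
  then show ?thesis using assms by (simp add: index_mult_real_diag_mat del: index_mult_mat(1))
qed

lemma conj_real_diag_mat_add:
  assumes U: "U \<in> carrier_mat n n"
  shows "U * real_diag_mat n (\<lambda>i. f i + g i) * mat_adjoint U =
    U * real_diag_mat n f * mat_adjoint U + U * real_diag_mat n g * mat_adjoint U"
proof -
  have UD: "U * real_diag_mat n h \<in> carrier_mat n n" for h
    using mult_carrier_mat[OF U real_diag_mat_carrier] .
  have "U * real_diag_mat n (\<lambda>i. f i + g i) = U * real_diag_mat n f + U * real_diag_mat n g"
    unfolding real_diag_mat_add[symmetric]
    by (rule mult_add_distrib_mat[OF U real_diag_mat_carrier real_diag_mat_carrier])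
  then show ?thesis
    by (simp only: add_mult_distrib_mat[OF UD UD mat_adjoint_carrier[OF U]])
qed

lemma conj_mat_mult:
  fixes X Y D :: "complex mat"
  assumes X: "X \<in> carrier_mat n n" and Y: "Y \<in> carrier_mat n n" and D: "D \<in> carrier_mat n n"
  shows "X * (Y * D * mat_adjoint Y) * mat_adjoint X = (X * Y) * D * mat_adjoint (X * Y)"
proof -
  have YD: "Y * D \<in> carrier_mat n n" using mult_carrier_mat[OF Y D] .
  have Y'X': "mat_adjoint Y * mat_adjoint X \<in> carrier_mat n n"
    using mult_carrier_mat[OF mat_adjoint_carrier[OF Y] mat_adjoint_carrier[OF X]] .
  have "X * (Y * D * mat_adjoint Y) * mat_adjoint X = X * (Y * D * mat_adjoint Y * mat_adjoint X)"
    using assoc_mult_mat[OF X mult_carrier_mat[OF YD mat_adjoint_carrier[OF Y]] mat_adjoint_carrier[OF X]] .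
  also have "Y * D * mat_adjoint Y * mat_adjoint X = Y * D * (mat_adjoint Y * mat_adjoint X)"
    using assoc_mult_mat[OF YD mat_adjoint_carrier[OF Y] mat_adjoint_carrier[OF X]] .
  also have "X * (Y * D * (mat_adjoint Y * mat_adjoint X)) = X * (Y * D) * (mat_adjoint Y * mat_adjoint X)"
    using assoc_mult_mat[OF X YD Y'X'] by simp
  also have "X * (Y * D) = X * Y * D" using assoc_mult_mat[OF X Y D] by simp
  finally show ?thesis using mat_adjoint_mult[OF X Y] by simp
qed

lemma conj_real_diag_mat_mult_unitary:
  assumes "unitary_mat n U"
  shows "U * real_diag_mat n f * mat_adjoint U * U = U * real_diag_mat n f"
proof -
  have U: "U \<in> carrier_mat n n" by (rule unitary_matD[OF assms])
  have "U * real_diag_mat n f * mat_adjoint U * U = U * real_diag_mat n f * (mat_adjoint U * U)"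
    using assoc_mult_mat[OF mult_carrier_mat[OF U real_diag_mat_carrier] mat_adjoint_carrier[OF U] U] .
  then show ?thesis using unitary_matD(2)[OF assms] U by simp
qed

lemma adjoint_conj_real_diag_mat:
  assumes V: "unitary_mat n V"
  shows "mat_adjoint V * (V * real_diag_mat n f * mat_adjoint V) * V = real_diag_mat n f"
proof -
  have Vc: "V \<in> carrier_mat n n" by (rule unitary_matD[OF V])
  have "mat_adjoint V * (V * real_diag_mat n f * mat_adjoint V) * V =
    mat_adjoint V * (V * real_diag_mat n f * mat_adjoint V * V)"
    using assoc_mult_mat[OF mat_adjoint_carrier[OF Vc] conj_real_diag_mat_carrier[OF Vc] Vc] .
  also have "\<dots> = real_diag_mat n f"
    unfolding conj_real_diag_mat_mult_unitary[OF V]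
    using unitary_mat_cancel(2)[OF V real_diag_mat_carrier] .
  finally show ?thesis .
qed

lemma mtrace_mult_comm:
  assumes "A \<in> carrier_mat n k" "B \<in> carrier_mat k n"
  shows "mtrace (A * B) = mtrace (B * A)"
proof -
  have "mtrace (A * B) = (\<Sum>i<n. \<Sum>l<k. A $$ (i, l) * B $$ (l, i))"
    unfolding mtrace_def using assms by (auto simp: index_mult_mat_sum[OF assms] simp del: index_mult_mat(1))
  also have "\<dots> = (\<Sum>l<k. \<Sum>i<n. B $$ (l, i) * A $$ (i, l))"
    by (subst sum.swap) (simp add: mult.commute)
  also have "\<dots> = mtrace (B * A)"
    unfolding mtrace_def using assms by (auto simp: index_mult_mat_sum[OF assms(2,1)] simp del: index_mult_mat(1))
  finally show ?thesis .
qed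

lemma mtrace_conj_real_diag_mat:
  assumes U: "unitary_mat n U"
  shows "mtrace (U * real_diag_mat n f * mat_adjoint U) = complex_of_real (\<Sum>i<n. f i)"
proof -
  have Uc: "U \<in> carrier_mat n n" by (rule unitary_matD[OF U])
  have "mtrace (U * real_diag_mat n f * mat_adjoint U) = mtrace (mat_adjoint U * (U * real_diag_mat n f))"
    using mtrace_mult_comm[OF mult_carrier_mat[OF Uc real_diag_mat_carrier] mat_adjoint_carrier[OF Uc]] .
  also have "\<dots> = mtrace (real_diag_mat n f)"
    using unitary_mat_cancel(2)[OF U real_diag_mat_carrier] by simp
  finally show ?thesis by (simp add: mtrace_def)
qed

definition perm_mat :: "nat \<Rightarrow> (nat \<Rightarrow> nat) \<Rightarrow> complex mat" where
  "perm_mat n p = mat n n (\<lambda>(i, j). if i = p j then 1 else 0)"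

lemma perm_mat_carrier [simp]: "perm_mat n p \<in> carrier_mat n n"
  and perm_mat_dim [simp]: "dim_row (perm_mat n p) = n" "dim_col (perm_mat n p) = n"
  and index_perm_mat [simp]: "i < n \<Longrightarrow> j < n \<Longrightarrow> perm_mat n p $$ (i, j) = (if i = p j then 1 else 0)"
  unfolding perm_mat_def by simp_all

lemma unitary_perm_mat:
  assumes p: "bij_betw p {..<n} {..<n}"
  shows "unitary_mat n (perm_mat n p)"
proof (rule unitary_matI_cols)
  fix i j assume i: "i < n" and j: "j < n"
  have col: "col (perm_mat n p) k = unit_vec n (p k)" if "k < n" for k
    using that by (intro eq_vecI) (auto simp: unit_vec_def)
  have "p i < n" "p j < n" "p i = p j \<longleftrightarrow> i = j"
    using i j p by (auto simp: bij_betw_def inj_on_def)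
  then show "col (perm_mat n p) j \<bullet>c col (perm_mat n p) i = (if i = j then 1 else 0)"
    using i j by (auto simp: col)
qed simp

lemma real_diag_mat_mult_perm_mat:
  "real_diag_mat n f * perm_mat n p = perm_mat n p * real_diag_mat n (f \<circ> p)"
  by (rule eq_matI) (auto simp: index_mult_real_diag_mat index_real_diag_mat_mult simp del: index_mult_mat(1))

lemma perm_mat_conj_real_diag_mat:
  assumes "bij_betw p {..<n} {..<n}"
  shows "mat_adjoint (perm_mat n p) * real_diag_mat n f * perm_mat n p = real_diag_mat n (f \<circ> p)"
proof -
  have "mat_adjoint (perm_mat n p) * real_diag_mat n f * perm_mat n p =
    mat_adjoint (perm_mat n p) * (perm_mat n p * real_diag_mat n (f \<circ> p))"
    using assoc_mult_mat[OF mat_adjoint_carrier[OF perm_mat_carrier] real_diag_mat_carrier perm_mat_carrier]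
    by (simp add: real_diag_mat_mult_perm_mat)
  then show ?thesis
    using unitary_mat_cancel(2)[OF unitary_perm_mat[OF assms] real_diag_mat_carrier] by simp
qed

section \<open>The spectral theorem for Hermitian matrices\<close>

lemma unit_eigenvector_exists:
  fixes A :: "complex mat"
  assumes A: "A \<in> carrier_mat (Suc n) (Suc n)"
  shows "\<exists>u e. u \<in> carrier_vec (Suc n) \<and> u \<bullet>c u = 1 \<and> A *\<^sub>v u = e \<cdot>\<^sub>v u"
proof -
  obtain es where es: "char_poly A = (\<Prod>a\<leftarrow>es. [:- a, 1:])" "length es = Suc n"
    using char_poly_factorized[OF A] by blast
  then obtain e es' where "es = e # es'" by (cases es) auto
  then have "poly (char_poly A) e = 0" using es(1) by simp
  then have "eigenvector A (find_eigenvector A e) e"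
    using find_eigenvector[OF A] eigenvalue_root_char_poly[OF A] by blast
  then obtain v where v: "v \<in> carrier_vec (Suc n)" "v \<noteq> 0\<^sub>v (Suc n)" "A *\<^sub>v v = e \<cdot>\<^sub>v v"
    unfolding eigenvector_def using A by auto
  obtain r where r: "r > 0" "v \<bullet>c v = complex_of_real (r\<^sup>2)" using cscalar_prod_self_pos[OF v(1,2)] by blast
  define u where "u = (1 / complex_of_real r) \<cdot>\<^sub>v v"
  have "u \<bullet>c u = 1" using v(1) r unfolding u_def by (simp add: conjugate_smult_vec power2_eq_square)
  moreover have "A *\<^sub>v u = e \<cdot>\<^sub>v u"
    using v A unfolding u_def by (simp add: mult_mat_vec smult_smult_assoc mult.commute)
  moreover have "u \<in> carrier_vec (Suc n)" using v(1) unfolding u_def by simp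
  ultimately show ?thesis by blast
qed

definition block_diag_mat :: "complex \<Rightarrow> complex mat \<Rightarrow> complex mat" where
  "block_diag_mat x M = mat (Suc (dim_row M)) (Suc (dim_col M))
     (\<lambda>(i, j). if i = 0 \<and> j = 0 then x else if i = 0 \<or> j = 0 then 0 else M $$ (i - 1, j - 1))"

lemma block_diag_mat_dim [simp]:
  "dim_row (block_diag_mat x M) = Suc (dim_row M)" "dim_col (block_diag_mat x M) = Suc (dim_col M)"
  unfolding block_diag_mat_def by simp_all

lemma block_diag_mat_carrier [simp]: "M \<in> carrier_mat n m \<Longrightarrow> block_diag_mat x M \<in> carrier_mat (Suc n) (Suc m)"
  by (intro carrier_matI) auto

lemma index_block_diag_mat [simp]:
  "block_diag_mat x M $$ (0, 0) = x"
  "j < dim_col M \<Longrightarrow> block_diag_mat x M $$ (0, Suc j) = 0"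
  "i < dim_row M \<Longrightarrow> block_diag_mat x M $$ (Suc i, 0) = 0"
  "i < dim_row M \<Longrightarrow> j < dim_col M \<Longrightarrow> block_diag_mat x M $$ (Suc i, Suc j) = M $$ (i, j)"
  unfolding block_diag_mat_def by simp_all

lemma block_diag_mat_mult:
  assumes M: "M \<in> carrier_mat n k" and N: "N \<in> carrier_mat k m"
  shows "block_diag_mat x M * block_diag_mat y N = block_diag_mat (x * y) (M * N)"
proof (rule eq_matI)
  fix i j assume "i < dim_row (block_diag_mat (x * y) (M * N))" "j < dim_col (block_diag_mat (x * y) (M * N))"
  then have i: "i < Suc n" and j: "j < Suc m" using M N by auto
  have "(block_diag_mat x M * block_diag_mat y N) $$ (i, j) =
    block_diag_mat x M $$ (i, 0) * block_diag_mat y N $$ (0, j) +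
    (\<Sum>l<k. block_diag_mat x M $$ (i, Suc l) * block_diag_mat y N $$ (Suc l, j))"
    using index_mult_mat_sum[OF block_diag_mat_carrier[OF M] block_diag_mat_carrier[OF N] i j]
    unfolding sum.lessThan_Suc_shift .
  then show "(block_diag_mat x M * block_diag_mat y N) $$ (i, j) = block_diag_mat (x * y) (M * N) $$ (i, j)"
    using i j M N by (cases i; cases j) (auto simp: index_mult_mat_sum[OF M N] simp del: index_mult_mat(1))
qed (use M N in auto)

lemma mat_adjoint_block_diag_mat: "mat_adjoint (block_diag_mat x M) = block_diag_mat (cnj x) (mat_adjoint M)"
proof (rule eq_matI)
  fix i j assume "i < dim_row (block_diag_mat (cnj x) (mat_adjoint M))" "j < dim_col (block_diag_mat (cnj x) (mat_adjoint M))"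
  then show "mat_adjoint (block_diag_mat x M) $$ (i, j) = block_diag_mat (cnj x) (mat_adjoint M) $$ (i, j)"
    by (cases i; cases j) auto
qed auto

lemma block_diag_mat_one: "block_diag_mat 1 (1\<^sub>m n) = 1\<^sub>m (Suc n)"
proof (rule eq_matI)
  fix i j assume "i < dim_row (1\<^sub>m (Suc n))" "j < dim_col (1\<^sub>m (Suc n))"
  then show "block_diag_mat 1 (1\<^sub>m n) $$ (i, j) = 1\<^sub>m (Suc n) $$ (i, j)"
    by (cases i; cases j) auto
qed auto

lemma real_diag_mat_Suc:
  "real_diag_mat (Suc n) f = block_diag_mat (complex_of_real (f 0)) (real_diag_mat n (\<lambda>i. f (Suc i)))"
proof (rule eq_matI)
  fix i j assume "i < dim_row (block_diag_mat (f 0) (real_diag_mat n (\<lambda>i. f (Suc i))))"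
    "j < dim_col (block_diag_mat (f 0) (real_diag_mat n (\<lambda>i. f (Suc i))))"
  then show "real_diag_mat (Suc n) f $$ (i, j) = block_diag_mat (f 0) (real_diag_mat n (\<lambda>i. f (Suc i))) $$ (i, j)"
    by (cases i; cases j) auto
qed auto

lemma unitary_block_diag_mat:
  assumes "unitary_mat n U"
  shows "unitary_mat (Suc n) (block_diag_mat 1 U)"
proof (rule unitary_matI)
  have U: "U \<in> carrier_mat n n" by (rule unitary_matD[OF assms])
  then show "block_diag_mat 1 U \<in> carrier_mat (Suc n) (Suc n)" by simp
  show "mat_adjoint (block_diag_mat 1 U) * block_diag_mat 1 U = 1\<^sub>m (Suc n)"
    using U unitary_matD(2)[OF assms]
    by (simp add: mat_adjoint_block_diag_mat block_diag_mat_mult[of _ n n _ n] block_diag_mat_one)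
qed

lemma hermitian_mat_first_col:
  assumes herm: "hermitian_mat (Suc n) A"
    and col0: "\<And>i. i < Suc n \<Longrightarrow> A $$ (i, 0) = (if i = 0 then e else 0)"
  shows "\<exists>r B. hermitian_mat n B \<and> A = block_diag_mat (complex_of_real r) B"
proof -
  have A: "A \<in> carrier_mat (Suc n) (Suc n)" "mat_adjoint A = A"
    using herm unfolding hermitian_mat_def by auto
  have sym: "cnj (A $$ (j, i)) = A $$ (i, j)" if "i < Suc n" "j < Suc n" for i j
    using arg_cong[OF A(2), of "\<lambda>M. M $$ (i, j)"] that A(1) by simp
  have "e \<in> \<real>" using sym[of 0 0] col0[of 0] by (simp add: Reals_cnj_iff)
  then have e: "complex_of_real (Re e) = e" by (simp add: of_real_Re)
  define B where "B = mat n n (\<lambda>(i, j). A $$ (Suc i, Suc j))"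
  have "hermitian_mat n B"
    unfolding hermitian_mat_def B_def by (auto intro!: eq_matI simp: sym)
  moreover have "A = block_diag_mat (complex_of_real (Re e)) B"
  proof (rule eq_matI)
    fix i j assume "i < dim_row (block_diag_mat (Re e) B)" "j < dim_col (block_diag_mat (Re e) B)"
    then have ij: "i < Suc n" "j < Suc n" by (simp_all add: B_def)
    show "A $$ (i, j) = block_diag_mat (Re e) B $$ (i, j)"
    proof (cases i)
      case 0
      then show ?thesis using col0 sym[of j 0] ij e by (cases j) (auto simp: B_def)
    next
      case (Suc i')
      then show ?thesis using col0 ij by (cases j) (auto simp: B_def)
    qed
  qed (use A in \<open>auto simp: B_def\<close>)
  ultimately show ?thesis by blast
qed

lemma hermitian_mat_deflate:
  assumes herm: "hermitian_mat (Suc n) A"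
  shows "\<exists>W r B. unitary_mat (Suc n) W \<and> hermitian_mat n B \<and>
    A = W * block_diag_mat (complex_of_real r) B * mat_adjoint W"
proof -
  have A: "A \<in> carrier_mat (Suc n) (Suc n)" using herm unfolding hermitian_mat_def by auto
  obtain u e where u: "u \<in> carrier_vec (Suc n)" "u \<bullet>c u = 1" "A *\<^sub>v u = e \<cdot>\<^sub>v u"
    using unit_eigenvector_exists[OF A] by blast
  obtain W where W: "unitary_mat (Suc n) W" "col W 0 = u" using unitary_mat_extend[OF u(1,2)] by blast
  have Wc: "W \<in> carrier_mat (Suc n) (Suc n)" by (rule unitary_matD[OF W(1)])
  have AW: "A * W \<in> carrier_mat (Suc n) (Suc n)" using mult_carrier_mat[OF A Wc] .
  define A' where "A' = mat_adjoint W * (A * W)"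
  have "A' = mat_adjoint W * A * W"
    unfolding A'_def using assoc_mult_mat[OF mat_adjoint_carrier[OF Wc] A Wc] by simp
  then have "hermitian_mat (Suc n) A'" using hermitian_mat_conj[OF herm Wc] by simp
  moreover have "A' $$ (i, 0) = (if i = 0 then e else 0)" if i: "i < Suc n" for i
  proof -
    have "col (A * W) 0 = e \<cdot>\<^sub>v col W 0" using col_mult2[OF A Wc, of 0] u(3) W(2) by simp
    then have "A' $$ (i, 0) = e * (mat_adjoint W * W) $$ (i, 0)"
      unfolding A'_def using i Wc by simp
    then show ?thesis using unitary_matD(2)[OF W(1)] i by simp
  qed
  ultimately obtain r B where B: "hermitian_mat n B" "A' = block_diag_mat (complex_of_real r) B"
    using hermitian_mat_first_col by blast
  have "W * A' * mat_adjoint W = A * W * mat_adjoint W"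
    unfolding A'_def using unitary_mat_cancel(1)[OF W(1) AW] by simp
  also have "\<dots> = A"
    using assoc_mult_mat[OF A Wc mat_adjoint_carrier[OF Wc]] unitary_matD(3)[OF W(1)] A by simp
  finally show ?thesis using W(1) B by metis
qed

lemma hermitian_mat_unitary_diagonalizable:
  "hermitian_mat n A \<Longrightarrow> \<exists>U f. unitary_mat n U \<and> A = U * real_diag_mat n f * mat_adjoint U"
proof (induction n arbitrary: A)
  case 0
  then have "A \<in> carrier_mat 0 0" unfolding hermitian_mat_def by simp
  then have "A = 1\<^sub>m 0 * real_diag_mat 0 f * mat_adjoint (1\<^sub>m 0)" for f by (intro eq_matI) auto
  then show ?case using unitary_mat_one by blast
next
  case (Suc n A)
  obtain W r B where W: "unitary_mat (Suc n) W" and B: "hermitian_mat n B"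
    and A: "A = W * block_diag_mat (complex_of_real r) B * mat_adjoint W"
    using hermitian_mat_deflate[OF Suc.prems] by blast
  obtain U f where U: "unitary_mat n U" and BU: "B = U * real_diag_mat n f * mat_adjoint U"
    using Suc.IH[OF B] by blast
  have Uc: "U \<in> carrier_mat n n" by (rule unitary_matD[OF U])
  define g where "g = case_nat r f"
  define L where "L = block_diag_mat 1 U"
  have Lc: "L \<in> carrier_mat (Suc n) (Suc n)" unfolding L_def using Uc by simp
  have UD: "U * real_diag_mat n f \<in> carrier_mat n n" using mult_carrier_mat[OF Uc real_diag_mat_carrier] .
  have "block_diag_mat (complex_of_real r) B = L * real_diag_mat (Suc n) g * mat_adjoint L"
    unfolding L_def BU real_diag_mat_Suc g_def
    using block_diag_mat_mult[OF Uc real_diag_mat_carrier] block_diag_mat_mult[OF UD mat_adjoint_carrier[OF Uc]]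
    by (simp add: mat_adjoint_block_diag_mat)
  then have "A = (W * L) * real_diag_mat (Suc n) g * mat_adjoint (W * L)"
    using A conj_mat_mult[OF unitary_matD(1)[OF W] Lc real_diag_mat_carrier] by simp
  moreover have "unitary_mat (Suc n) (W * L)"
    unfolding L_def by (rule unitary_mat_mult[OF W unitary_block_diag_mat[OF U]])
  ultimately show ?case by blast
qed

lemma spectral_decomp_exists:
  assumes "hermitian_mat n A"
  shows "\<exists>U ls. spectral_decomp n A U ls"
proof -
  obtain U f where U: "unitary_mat n U" and A: "A = U * real_diag_mat n f * mat_adjoint U"
    using hermitian_mat_unitary_diagonalizable[OF assms] by blast
  define ls0 where "ls0 = map f [0..<n]"
  obtain p where p: "p permutes {..<length ls0}" and sorted: "permute_list p ls0 = sort ls0"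
    using mset_eq_permutation[of "sort ls0" ls0] by auto
  have bij: "bij_betw p {..<n} {..<n}" using permutes_imp_bij[OF p] by (simp add: ls0_def)
  have nth_sort: "sort ls0 ! k = f (p k)" if "k < n" for k
  proof -
    have "p k < n" using bij that by (auto dest: bij_betwE)
    then show ?thesis using permute_list_nth[OF p, of k] that sorted by (simp add: ls0_def)
  qed
  define P where "P = perm_mat n p"
  have Pc: "P \<in> carrier_mat n n" unfolding P_def by simp
  have "P * real_diag_mat n (f \<circ> p) * mat_adjoint P = real_diag_mat n f * P * mat_adjoint P"
    unfolding P_def by (simp add: real_diag_mat_mult_perm_mat)
  also have "\<dots> = real_diag_mat n f"
    using assoc_mult_mat[OF real_diag_mat_carrier Pc mat_adjoint_carrier[OF Pc]]
      unitary_matD(3)[OF unitary_perm_mat[OF bij]] by (simp add: P_def)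
  finally have PD: "P * real_diag_mat n (f \<circ> p) * mat_adjoint P = real_diag_mat n f" .
  have "A = (U * P) * real_diag_mat n (f \<circ> p) * mat_adjoint (U * P)"
    unfolding A PD[symmetric] by (rule conj_mat_mult[OF unitary_matD(1)[OF U] Pc real_diag_mat_carrier])
  moreover have "length (sort ls0) = n" by (simp add: ls0_def)
  moreover have "real_diag_mat n (f \<circ> p) = diag_real (sort ls0)"
    unfolding diag_real_eq_real_diag_mat \<open>length (sort ls0) = n\<close>
    by (intro real_diag_mat_cong) (simp add: nth_sort)
  moreover have "unitary_mat n (U * P)"
    unfolding P_def by (rule unitary_mat_mult[OF U unitary_perm_mat[OF bij]])
  ultimately have "spectral_decomp n A (U * P) (sort ls0)"
    unfolding spectral_decomp_def by simp
  then show ?thesis by blast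
qed

lemma psd_eigenvalue_nonneg:
  assumes psd: "psd_mat n A" and U: "unitary_mat n U"
    and A: "A = U * real_diag_mat n f * mat_adjoint U" and i: "i < n"
  shows "0 \<le> f i"
proof -
  have Uc: "U \<in> carrier_mat n n" by (rule unitary_matD[OF U])
  define v where "v = col U i"
  have v: "v \<in> carrier_vec n" unfolding v_def using Uc by (auto intro!: carrier_vecI)
  have AU: "A * U = U * real_diag_mat n f" unfolding A by (rule conj_real_diag_mat_mult_unitary[OF U])
  have Ac: "A \<in> carrier_mat n n" using psd unfolding psd_mat_def hermitian_mat_def by simp
  have "A *\<^sub>v v = col (A * U) i" unfolding v_def using col_mult2[OF Ac Uc i] by simp
  also have "\<dots> = complex_of_real (f i) \<cdot>\<^sub>v v"
    unfolding AU v_def using Uc i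
    by (intro eq_vecI) (auto simp: index_mult_real_diag_mat mult.commute simp del: index_mult_mat(1))
  finally have Av: "A *\<^sub>v v = complex_of_real (f i) \<cdot>\<^sub>v v" .
  obtain r :: real where r: "0 \<le> r" "(A *\<^sub>v v) \<bullet>c v = complex_of_real r"
    using psd v unfolding psd_mat_def by blast
  have "(A *\<^sub>v v) \<bullet>c v = complex_of_real (f i)"
    unfolding Av using v unitary_mat_col_cscalar[OF U i i] by (simp add: v_def)
  then show ?thesis using r by simp
qed

section \<open>Trace norm and rank of diagonal operators\<close>

lemma psd_real_diag_mat:
  assumes "\<And>i. i < n \<Longrightarrow> 0 \<le> f i"
  shows "psd_mat n (real_diag_mat n f)"
  unfolding psd_mat_def hermitian_mat_def
proof (intro conjI ballI)
  fix v :: "complex vec" assume v: "v \<in> carrier_vec n"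
  have "(real_diag_mat n f *\<^sub>v v) \<bullet>c v = (\<Sum>k<n. complex_of_real (f k) * v $ k * cnj (v $ k))"
    using v by (simp add: cscalar_prod_sum[of _ n] scalar_prod_def sum.delta lessThan_atLeast0
        if_distrib[of "\<lambda>x. x * _"] cong: if_cong)
  also have "\<dots> = complex_of_real (\<Sum>k<n. f k * (cmod (v $ k))\<^sup>2)"
    by (simp add: complex_norm_square[symmetric] mult.assoc)
  finally show "\<exists>r. 0 \<le> r \<and> (real_diag_mat n f *\<^sub>v v) \<bullet>c v = complex_of_real r"
    using assms by (intro exI[of _ "\<Sum>k<n. f k * (cmod (v $ k))\<^sup>2"]) (auto intro!: sum_nonneg)
qed simp_all

lemma real_diag_mat_intertwine_sqrt:
  assumes W: "W \<in> carrier_mat n n" and s: "\<forall>i < n. 0 \<le> s i" and \<mu>: "\<forall>k < n. 0 \<le> \<mu> k"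
    and DW: "real_diag_mat n (\<lambda>i. (s i)\<^sup>2) * W = W * real_diag_mat n (\<lambda>i. (\<mu> i)\<^sup>2)"
  shows "real_diag_mat n s * W = W * real_diag_mat n \<mu>"
proof (rule eq_matI)
  fix a k assume "a < dim_row (W * real_diag_mat n \<mu>)" "k < dim_col (W * real_diag_mat n \<mu>)"
  then have ak: "a < n" "k < n" using W by auto
  have sq: "complex_of_real ((s a)\<^sup>2) * W $$ (a, k) = complex_of_real ((\<mu> k)\<^sup>2) * W $$ (a, k)"
    using arg_cong[OF DW, of "\<lambda>M. M $$ (a, k)"] ak W
    by (simp add: index_mult_real_diag_mat index_real_diag_mat_mult mult.commute del: index_mult_mat(1))
  have "s a = \<mu> k" if "W $$ (a, k) \<noteq> 0"
  proof -
    have "complex_of_real ((s a)\<^sup>2) = complex_of_real ((\<mu> k)\<^sup>2)"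
      using mult_right_cancel[OF that] sq by blast
    then have "(s a)\<^sup>2 = (\<mu> k)\<^sup>2" by (simp only: of_real_eq_iff)
    then show ?thesis using s \<mu> ak by (simp add: power2_eq_iff_nonneg)
  qed
  then show "(real_diag_mat n s * W) $$ (a, k) = (W * real_diag_mat n \<mu>) $$ (a, k)"
    using ak W by (auto simp: index_mult_real_diag_mat index_real_diag_mat_mult mult.commute
        simp del: index_mult_mat(1))
qed (use W in auto)

text \<open>Uniqueness of the positive square root of \<open>diag s\<^sup>2\<close>: diagonalize the root as
  \<open>W diag \<mu> W\<^sup>H\<close> and compare \<open>diag s\<^sup>2 W = W diag \<mu>\<^sup>2\<close> entrywise.\<close>

lemma psd_sqrt_real_diag_mat:
  assumes s: "\<And>i. i < n \<Longrightarrow> 0 \<le> s i" and R: "psd_mat n R"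
    and RR: "R * R = real_diag_mat n (\<lambda>i. (s i)\<^sup>2)"
  shows "R = real_diag_mat n s"
proof -
  obtain W \<mu> where W: "unitary_mat n W" and RW: "R = W * real_diag_mat n \<mu> * mat_adjoint W"
    using hermitian_mat_unitary_diagonalizable R unfolding psd_mat_def by blast
  have Wc: "W \<in> carrier_mat n n" by (rule unitary_matD[OF W])
  have Rc: "R \<in> carrier_mat n n" using R unfolding psd_mat_def hermitian_mat_def by simp
  have \<mu>: "\<forall>k < n. 0 \<le> \<mu> k" using psd_eigenvalue_nonneg[OF R W RW] by blast
  have RW': "R * W = W * real_diag_mat n \<mu>" unfolding RW by (rule conj_real_diag_mat_mult_unitary[OF W])
  have "R * R * W = R * (W * real_diag_mat n \<mu>)" using assoc_mult_mat[OF Rc Rc Wc] RW' by simp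
  also have "\<dots> = R * W * real_diag_mat n \<mu>"
    using assoc_mult_mat[OF Rc Wc real_diag_mat_carrier] by simp
  also have "\<dots> = W * real_diag_mat n (\<lambda>i. (\<mu> i)\<^sup>2)"
    unfolding RW' using assoc_mult_mat[OF Wc real_diag_mat_carrier real_diag_mat_carrier]
    by (simp add: real_diag_mat_mult power2_eq_square)
  finally have "real_diag_mat n s * W = W * real_diag_mat n \<mu>"
    unfolding RR using real_diag_mat_intertwine_sqrt[OF Wc _ \<mu>] s by blast
  then have "R = real_diag_mat n s * W * mat_adjoint W" unfolding RW by simp
  also have "\<dots> = real_diag_mat n s"
    using assoc_mult_mat[OF real_diag_mat_carrier Wc mat_adjoint_carrier[OF Wc]] unitary_matD(3)[OF W]
    by simp
  finally show ?thesis .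
qed

lemma trace_norm_real_diag_mat: "trace_norm n (real_diag_mat n f) = (\<Sum>i<n. \<bar>f i\<bar>)"
proof -
  let ?S = "real_diag_mat n (\<lambda>i. \<bar>f i\<bar>)"
  have psd: "psd_mat n ?S" by (rule psd_real_diag_mat) simp
  have SS: "?S * ?S = real_diag_mat n (\<lambda>i. \<bar>f i\<bar>\<^sup>2)"
    unfolding real_diag_mat_mult by (rule real_diag_mat_cong) (simp add: power2_eq_square)
  have XX: "mat_adjoint (real_diag_mat n f) * real_diag_mat n f = real_diag_mat n (\<lambda>i. \<bar>f i\<bar>\<^sup>2)"
    unfolding mat_adjoint_real_diag_mat real_diag_mat_mult
    by (rule real_diag_mat_cong) (simp only: power2_eq_square abs_mult_self_eq)
  have "(THE R. psd_mat n R \<and> R * R = real_diag_mat n (\<lambda>i. \<bar>f i\<bar>\<^sup>2)) = ?S"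
  proof (rule the_equality)
    fix R assume R: "psd_mat n R \<and> R * R = real_diag_mat n (\<lambda>i. \<bar>f i\<bar>\<^sup>2)"
    show "R = ?S" by (rule psd_sqrt_real_diag_mat) (use R in auto)
  qed (use psd SS in blast)
  then show ?thesis unfolding trace_norm_def XX by (simp add: mtrace_def)
qed

lemma trace_norm_real_diag_minus_ket0bra0:
  assumes d: "0 < d" and nonneg: "\<forall>a < d. 0 \<le> q a" and sum: "(\<Sum>a<d. q a) = 1"
  shows "trace_norm d (real_diag_mat d q - ket0bra0 d) = 2 * (1 - q 0)"
proof -
  obtain d' where d': "d = Suc d'" using d by (cases d) auto
  have q0: "q 0 + (\<Sum>a<d'. q (Suc a)) = 1" using sum unfolding d' sum.lessThan_Suc_shift .
  have rest: "0 \<le> (\<Sum>a<d'. q (Suc a))" using nonneg d' by (intro sum_nonneg) simp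
  have eq: "real_diag_mat d q - ket0bra0 d = real_diag_mat d (\<lambda>a. q a - (if a = 0 then 1 else 0))"
    unfolding ket0bra0_eq_real_diag_mat by (rule eq_matI) auto
  have "trace_norm d (real_diag_mat d q - ket0bra0 d) = (\<Sum>a<d. \<bar>q a - (if a = 0 then 1 else 0)\<bar>)"
    unfolding eq by (rule trace_norm_real_diag_mat)
  also have "\<dots> = \<bar>q 0 - 1\<bar> + (\<Sum>a<d'. q (Suc a))"
    unfolding d' sum.lessThan_Suc_shift using nonneg d' by simp
  finally show ?thesis using q0 rest by simp
qed

lemma rank_conj_real_diag_mat_indicator:
  assumes V: "unitary_mat n V" and "k \<le> n"
  shows "vec_space.rank n (V * real_diag_mat n (\<lambda>i. if i < k then 1 else 0) * mat_adjoint V) \<le> k"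
  using assms(2)
proof (induction k)
  case 0
  have "V * real_diag_mat n (\<lambda>i. if i < 0 then 1 else 0) * mat_adjoint V = 0\<^sub>m n n"
    using unitary_matD(1)[OF V]
    by (intro eq_matI) (simp_all add: index_conj_real_diag_mat del: index_mult_mat(1))
  then show ?case using vec_space.rank_0I by simp
next
  case (Suc k)
  have Vc: "V \<in> carrier_mat n n" by (rule unitary_matD[OF V])
  define E where "E j = V * real_diag_mat n (\<lambda>i. if i < j then 1 else 0) * mat_adjoint V" for j
  define F where "F = V * real_diag_mat n (\<lambda>i. if i = k then 1 else 0) * mat_adjoint V"
  have carr: "V * real_diag_mat n g * mat_adjoint V \<in> carrier_mat n n" for g
    using conj_real_diag_mat_carrier[OF Vc] .
  have "E (Suc k) = E k + F"
    unfolding E_def F_def conj_real_diag_mat_add[OF Vc, symmetric]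
    by (intro arg_cong[of _ _ "\<lambda>g. V * real_diag_mat n g * mat_adjoint V"]) auto
  then have "vec_space.rank n (E (Suc k)) \<le> vec_space.rank n (E k) + vec_space.rank n F"
    using vec_space.rank_subadditive[OF carr carr] unfolding E_def F_def by simp
  moreover have "vec_space.rank n F \<le> 1"
  proof (rule vec_space.rank_le_1_product_entries[OF carr[of "\<lambda>i. if i = k then 1 else 0", folded F_def]])
    fix a b assume "a < dim_row F" "b < dim_col F"
    show "F $$ (a, b) = V $$ (a, k) * cnj (V $$ (b, k))"
    proof -
      have ab: "a < n" "b < n" using \<open>a < dim_row F\<close> \<open>b < dim_col F\<close> Vc by (simp_all add: F_def)
      have "F $$ (a, b) = (\<Sum>l<n. if l = k then V $$ (a, k) * cnj (V $$ (b, k)) else 0)"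
        unfolding F_def index_conj_real_diag_mat[OF Vc ab] by (intro sum.cong) auto
      then show ?thesis using Suc.prems by simp
    qed
  qed
  ultimately show ?case using Suc by (simp add: E_def)
qed

lemma rank_conj_real_diag_mat_ge:
  assumes V: "unitary_mat n V" and m: "m \<le> n"
    and zero: "\<And>i. i < m \<Longrightarrow> f i = 0" and nonzero: "\<And>i. m \<le> i \<Longrightarrow> i < n \<Longrightarrow> f i \<noteq> 0"
  shows "n - m \<le> vec_space.rank n (V * real_diag_mat n f * mat_adjoint V)"
proof -
  have Vc: "V \<in> carrier_mat n n" by (rule unitary_matD[OF V])
  \<comment> \<open>\<open>S\<close> is invertible and differs from the target by a matrix of rank at most \<open>m\<close>\<close>
  define g where "g i = f i + (if i < m then 1 else 0)" for i
  define S where "S = V * real_diag_mat n g * mat_adjoint V"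
  have carr: "V * real_diag_mat n h * mat_adjoint V \<in> carrier_mat n n" for h
    using conj_real_diag_mat_carrier[OF Vc] .
  have "det S = det (real_diag_mat n g) * det (V * mat_adjoint V)"
    unfolding S_def using Vc
    by (simp add: det_mult[OF mult_carrier_mat[OF Vc real_diag_mat_carrier] mat_adjoint_carrier]
        det_mult[OF Vc real_diag_mat_carrier] det_mult[OF Vc mat_adjoint_carrier])
  also have "det (real_diag_mat n g) = (\<Prod>i = 0..<n. complex_of_real (g i))"
    by (subst det_upper_triangular[of _ n]) (auto simp: upper_triangular_def prod_list_diag_prod
        intro!: prod.cong)
  finally have "det S \<noteq> 0"
    using unitary_matD(3)[OF V] zero nonzero by (auto simp: g_def)
  then have "n = vec_space.rank n S" using vec_space.det_rank_iff[OF carr] by (simp add: S_def)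
  also have "S = V * real_diag_mat n f * mat_adjoint V +
      V * real_diag_mat n (\<lambda>i. if i < m then 1 else 0) * mat_adjoint V"
    unfolding S_def g_def by (rule conj_real_diag_mat_add[OF Vc])
  also have "vec_space.rank n \<dots> \<le> vec_space.rank n (V * real_diag_mat n f * mat_adjoint V) + m"
    using vec_space.rank_subadditive[OF carr[of f] carr[of "\<lambda>i. if i < m then 1 else 0"]]
      rank_conj_real_diag_mat_indicator[OF V m] by simp
  finally show ?thesis by simp
qed

section \<open>Tensor products and the partial trace\<close>

lemma tensor_mat_dim [simp]:
  "dim_row (tensor_mat A B) = dim_row A * dim_row B" "dim_col (tensor_mat A B) = dim_col A * dim_col B"
  unfolding tensor_mat_def by simp_all

lemma tensor_mat_carrier [simp]:
  "A \<in> carrier_mat n1 m1 \<Longrightarrow> B \<in> carrier_mat n2 m2 \<Longrightarrow> tensor_mat A B \<in> carrier_mat (n1 * n2) (m1 * m2)"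
  by auto

lemma index_tensor_mat [simp]:
  "i < dim_row A * dim_row B \<Longrightarrow> j < dim_col A * dim_col B \<Longrightarrow>
   tensor_mat A B $$ (i, j) = A $$ (i div dim_row B, j div dim_col B) * B $$ (i mod dim_row B, j mod dim_col B)"
  unfolding tensor_mat_def by simp

lemma tensor_mat_mult:
  assumes A: "A \<in> carrier_mat n1 k1" and C: "C \<in> carrier_mat k1 m1"
    and B: "B \<in> carrier_mat n2 k2" and D: "D \<in> carrier_mat k2 m2"
  shows "tensor_mat A B * tensor_mat C D = tensor_mat (A * C) (B * D)"
proof (rule eq_matI)
  fix x y assume "x < dim_row (tensor_mat (A * C) (B * D))" "y < dim_col (tensor_mat (A * C) (B * D))"
  then have x: "x < n1 * n2" and y: "y < m1 * m2" using A B C D by auto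
  note xy = div_mod_less_mult[OF x] div_mod_less_mult[OF y]
  have "(tensor_mat A B * tensor_mat C D) $$ (x, y) =
    (\<Sum>z<k1 * k2. tensor_mat A B $$ (x, z) * tensor_mat C D $$ (z, y))"
    using A B C D x y by (intro index_mult_mat_sum[of _ "n1 * n2" "k1 * k2" _ "m1 * m2"]) auto
  also have "\<dots> = (\<Sum>a<k1. \<Sum>b<k2. (A $$ (x div n2, a) * C $$ (a, y div m2)) *
      (B $$ (x mod n2, b) * D $$ (b, y mod m2)))"
    unfolding sum_lessThan_mult_split
  proof (intro sum.cong refl)
    fix a b assume "a \<in> {..<k1}" "b \<in> {..<k2}"
    then have "a * k2 + b < k1 * k2" "b < k2" by (simp_all add: mult_add_less_mult)
    then show "tensor_mat A B $$ (x, a * k2 + b) * tensor_mat C D $$ (a * k2 + b, y) =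
      (A $$ (x div n2, a) * C $$ (a, y div m2)) * (B $$ (x mod n2, b) * D $$ (b, y mod m2))"
      using A B C D x y by (simp add: ac_simps)
  qed
  also have "\<dots> = (A * C) $$ (x div n2, y div m2) * (B * D) $$ (x mod n2, y mod m2)"
    using xy by (simp add: index_mult_mat_sum[OF A C] index_mult_mat_sum[OF B D] sum_product
        del: index_mult_mat(1))
  finally show "(tensor_mat A B * tensor_mat C D) $$ (x, y) = tensor_mat (A * C) (B * D) $$ (x, y)"
    using A B C D x y by simp
qed (use A B C D in auto)

lemma mat_adjoint_tensor_mat: "mat_adjoint (tensor_mat A B) = tensor_mat (mat_adjoint A) (mat_adjoint B)"
proof (rule eq_matI)
  fix x y assume "x < dim_row (tensor_mat (mat_adjoint A) (mat_adjoint B))"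
    "y < dim_col (tensor_mat (mat_adjoint A) (mat_adjoint B))"
  then have x: "x < dim_col A * dim_col B" and y: "y < dim_row A * dim_row B" by auto
  then show "mat_adjoint (tensor_mat A B) $$ (x, y) = tensor_mat (mat_adjoint A) (mat_adjoint B) $$ (x, y)"
    using div_mod_less_mult[OF x] div_mod_less_mult[OF y] by simp
qed auto

lemma tensor_mat_one: "tensor_mat (1\<^sub>m a) (1\<^sub>m b) = (1\<^sub>m (a * b) :: complex mat)"
proof (rule eq_matI)
  fix x y assume "x < dim_row (1\<^sub>m (a * b) :: complex mat)" "y < dim_col (1\<^sub>m (a * b) :: complex mat)"
  then have x: "x < a * b" and y: "y < a * b" by auto
  have "x = y \<longleftrightarrow> x div b = y div b \<and> x mod b = y mod b" by (metis div_mult_mod_eq)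
  then show "tensor_mat (1\<^sub>m a) (1\<^sub>m b) $$ (x, y) = (1\<^sub>m (a * b) :: complex mat) $$ (x, y)"
    using x y div_mod_less_mult[OF x] div_mod_less_mult[OF y] by simp
qed auto

lemma unitary_tensor_mat:
  assumes U: "unitary_mat a U" and V: "unitary_mat b V"
  shows "unitary_mat (a * b) (tensor_mat U V)"
proof (rule unitary_matI)
  have Uc: "U \<in> carrier_mat a a" and Vc: "V \<in> carrier_mat b b"
    using U V by (simp_all add: unitary_mat_carrier)
  then show "tensor_mat U V \<in> carrier_mat (a * b) (a * b)" by simp
  show "mat_adjoint (tensor_mat U V) * tensor_mat U V = 1\<^sub>m (a * b)"
    unfolding mat_adjoint_tensor_mat
    using tensor_mat_mult[OF mat_adjoint_carrier[OF Uc] Uc mat_adjoint_carrier[OF Vc] Vc]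
      unitary_matD(2)[OF U] unitary_matD(2)[OF V] by (simp add: tensor_mat_one)
qed

lemma tensor_real_diag_mat:
  "tensor_mat (real_diag_mat a f) (real_diag_mat b g) = real_diag_mat (a * b) (\<lambda>x. f (x div b) * g (x mod b))"
proof (rule eq_matI)
  fix x y assume "x < dim_row (real_diag_mat (a * b) (\<lambda>x. f (x div b) * g (x mod b)))"
    "y < dim_col (real_diag_mat (a * b) (\<lambda>x. f (x div b) * g (x mod b)))"
  then have x: "x < a * b" and y: "y < a * b" by auto
  have "x = y \<longleftrightarrow> x div b = y div b \<and> x mod b = y mod b" by (metis div_mult_mod_eq)
  then show "tensor_mat (real_diag_mat a f) (real_diag_mat b g) $$ (x, y) =
      real_diag_mat (a * b) (\<lambda>x. f (x div b) * g (x mod b)) $$ (x, y)"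
    using x y div_mod_less_mult[OF x] div_mod_less_mult[OF y] by auto
qed auto

lemma ptrace2_real_diag_mat:
  "ptrace2 d c (real_diag_mat (d * c) f) = real_diag_mat d (\<lambda>a. \<Sum>b<c. f (a * c + b))"
proof (rule eq_matI)
  fix a a' assume "a < dim_row (real_diag_mat d (\<lambda>a. \<Sum>b<c. f (a * c + b)))"
    "a' < dim_col (real_diag_mat d (\<lambda>a. \<Sum>b<c. f (a * c + b)))"
  then have a: "a < d" and a': "a' < d" by auto
  have "ptrace2 d c (real_diag_mat (d * c) f) $$ (a, a') =
    (\<Sum>b<c. real_diag_mat (d * c) f $$ (a * c + b, a' * c + b))"
    unfolding ptrace2_def using a a' by simp
  also have "\<dots> = (\<Sum>b<c. if a = a' then complex_of_real (f (a * c + b)) else 0)"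
  proof (intro sum.cong refl)
    fix b assume "b \<in> {..<c}"
    then have "a * c + b < d * c" "a' * c + b < d * c" "b < c"
      using a a' by (simp_all add: mult_add_less_mult)
    then show "real_diag_mat (d * c) f $$ (a * c + b, a' * c + b) =
      (if a = a' then complex_of_real (f (a * c + b)) else 0)" by auto
  qed
  finally show "ptrace2 d c (real_diag_mat (d * c) f) $$ (a, a') =
      real_diag_mat d (\<lambda>a. \<Sum>b<c. f (a * c + b)) $$ (a, a')"
    using a a' by (cases "a = a'") simp_all
qed (auto simp: ptrace2_def)

section \<open>The concentration code\<close>

lemma tensor_eigenbasis_conj:
  fixes c :: nat
  assumes V: "unitary_mat d V"
  defines "W \<equiv> tensor_mat (mat_adjoint V) (1\<^sub>m c)"
  shows "W * tensor_mat (V * real_diag_mat d f * mat_adjoint V) (ket0bra0 c) * mat_adjoint W =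
    real_diag_mat (d * c) (\<lambda>x. if x mod c = 0 then f (x div c) else 0)"
proof -
  have Vc: "V \<in> carrier_mat d d" by (rule unitary_matD[OF V])
  let ?K = "real_diag_mat c (\<lambda>i. if i = 0 then 1 else 0)"
  have "W * tensor_mat (V * real_diag_mat d f * mat_adjoint V) ?K * mat_adjoint W =
    tensor_mat (mat_adjoint V * (V * real_diag_mat d f * mat_adjoint V) * V) (1\<^sub>m c * ?K * 1\<^sub>m c)"
    unfolding W_def mat_adjoint_tensor_mat
    using tensor_mat_mult[OF mat_adjoint_carrier[OF Vc] conj_real_diag_mat_carrier[OF Vc] one_carrier_mat
        real_diag_mat_carrier]
      tensor_mat_mult[OF mult_carrier_mat[OF mat_adjoint_carrier[OF Vc] conj_real_diag_mat_carrier[OF Vc]]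
        Vc mult_carrier_mat[OF one_carrier_mat real_diag_mat_carrier] one_carrier_mat]
    by simp
  also have "\<dots> = real_diag_mat (d * c) (\<lambda>x. if x mod c = 0 then f (x div c) else 0)"
    unfolding adjoint_conj_real_diag_mat[OF V] left_mult_one_mat[OF real_diag_mat_carrier]
      right_mult_one_mat[OF real_diag_mat_carrier] tensor_real_diag_mat
    by (intro real_diag_mat_cong) simp
  finally show ?thesis unfolding ket0bra0_eq_real_diag_mat .
qed

lemma concentration_unitary:
  assumes V: "unitary_mat d V" and \<sigma>: "bij_betw \<sigma> {..<d * c} {..<d * c}"
  defines "U \<equiv> mat_adjoint (perm_mat (d * c) \<sigma>) * tensor_mat (mat_adjoint V) (1\<^sub>m c)"
  shows "unitary_mat (d * c) U"
    and "U * tensor_mat (V * real_diag_mat d f * mat_adjoint V) (ket0bra0 c) * mat_adjoint U =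
      real_diag_mat (d * c) (\<lambda>x. if \<sigma> x mod c = 0 then f (\<sigma> x div c) else 0)"
proof -
  have Vc: "V \<in> carrier_mat d d" by (rule unitary_matD[OF V])
  define P where "P = perm_mat (d * c) \<sigma>"
  define W where "W = tensor_mat (mat_adjoint V) (1\<^sub>m c)"
  have P: "unitary_mat (d * c) P" unfolding P_def by (rule unitary_perm_mat[OF \<sigma>])
  have W: "unitary_mat (d * c) W"
    unfolding W_def by (rule unitary_tensor_mat[OF unitary_mat_adjoint[OF V] unitary_mat_one])
  show "unitary_mat (d * c) U"
    unfolding U_def P_def[symmetric] W_def[symmetric] by (rule unitary_mat_mult[OF unitary_mat_adjoint[OF P] W])
  let ?M = "tensor_mat (V * real_diag_mat d f * mat_adjoint V) (ket0bra0 c)"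
  have Mc: "?M \<in> carrier_mat (d * c) (d * c)"
    unfolding ket0bra0_eq_real_diag_mat
    using tensor_mat_carrier[OF conj_real_diag_mat_carrier[OF Vc] real_diag_mat_carrier] .
  have "U * ?M * mat_adjoint U = mat_adjoint P * (W * ?M * mat_adjoint W) * P"
    unfolding U_def P_def[symmetric] W_def[symmetric]
    using conj_mat_mult[OF mat_adjoint_carrier[OF unitary_matD(1)[OF P]] unitary_matD(1)[OF W] Mc] by simp
  then show "U * ?M * mat_adjoint U =
      real_diag_mat (d * c) (\<lambda>x. if \<sigma> x mod c = 0 then f (\<sigma> x div c) else 0)"
    unfolding W_def tensor_eigenbasis_conj[OF V] P_def perm_mat_conj_real_diag_mat[OF \<sigma>]
    by (simp add: comp_def)
qed

lemma inj_on_add_mod: "inj_on (\<lambda>y. (y + m) mod n) {..<n :: nat}"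
proof -
  have "y = y'" if "y < n" "y' < n" "y \<le> y'" "(y + m) mod n = (y' + m) mod n" for y y'
  proof -
    have "n dvd y' - y" using mod_eq_dvd_iff_nat[of "y + m" "y' + m" n] that(3,4) by simp
    moreover have "y' - y < n" using that(1-3) by simp
    ultimately have "y' - y = 0" by (metis gr0I nat_dvd_not_less)
    then show ?thesis using that(3) by simp
  qed
  then show ?thesis by (intro inj_onI) (metis lessThan_iff nat_le_linear)
qed

lemma grid_shift_permutation:
  fixes m d c :: nat
  assumes "m \<le> d" "d - m \<le> c"
  shows "\<exists>\<sigma>. bij_betw \<sigma> {..<d * c} {..<d * c} \<and> (\<forall>y < d - m. \<sigma> y = (m + y) * c)"
proof -
  define n where "n = d * c"
  \<comment> \<open>rotate by \<open>m\<close>, then read the index \<open>s = b * d + a\<close> of a \<open>c \<times> d\<close> grid as \<open>a * c + b\<close>\<close>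
  define \<sigma> where "\<sigma> y = ((y + m) mod n) mod d * c + (y + m) mod n div d" for y
  have lt: "s mod d * c + s div d < n" if "s < n" for s
    using that div_mod_less_mult[of s c d] mult_add_less_mult unfolding n_def by (metis mult.commute)
  have "inj_on \<sigma> {..<n}"
  proof (rule inj_onI)
    fix y y' assume y: "y \<in> {..<n}" and y': "y' \<in> {..<n}" and eq: "\<sigma> y = \<sigma> y'"
    define s s' where "s = (y + m) mod n" and "s' = (y' + m) mod n"
    have "s < n" "s' < n" using y unfolding s_def s'_def by auto
    then have "s div d < c" "s' div d < c" unfolding n_def by (metis div_mod_less_mult(1) mult.commute)+
    then have "s mod d = s' mod d \<and> s div d = s' div d"
      using arg_cong[OF eq, of "\<lambda>x. x div c"] arg_cong[OF eq, of "\<lambda>x. x mod c"]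
      unfolding \<sigma>_def s_def[symmetric] s'_def[symmetric] by simp
    then have "s = s'" by (metis div_mult_mod_eq)
    then show "y = y'" using inj_on_add_mod y y' unfolding s_def s'_def by (auto dest: inj_onD)
  qed
  moreover have "\<sigma> ` {..<n} \<subseteq> {..<n}"
    unfolding \<sigma>_def using lt by (auto intro: mod_less_divisor)
  ultimately have "bij_betw \<sigma> {..<n} {..<n}" by (simp add: bij_betw_def endo_inj_surj)
  moreover have "\<sigma> y = (m + y) * c" if "y < d - m" for y
  proof -
    have "y + m < d" "d \<le> n" using that assms unfolding n_def by (auto intro: le_trans)
    then show ?thesis unfolding \<sigma>_def by (simp add: add.commute)
  qed
  ultimately show ?thesis unfolding n_def by blast
qed

lemma sum_first_column:
  fixes c d :: nat
  assumes "0 < c"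
  shows "(\<Sum>x<d * c. if x mod c = 0 then f (x div c) else 0) = (\<Sum>a<d. f a)"
proof -
  have "(\<Sum>x<d * c. if x mod c = 0 then f (x div c) else 0) =
    (\<Sum>a<d. \<Sum>b<c. if (a * c + b) mod c = 0 then f ((a * c + b) div c) else 0)"
    by (rule sum_lessThan_mult_split)
  also have "\<dots> = (\<Sum>a<d. \<Sum>b<c. if b = 0 then f a else 0)" by (intro sum.cong refl) auto
  finally show ?thesis using assms by simp
qed

lemma grid_shift_weights:
  fixes f :: "nat \<Rightarrow> real" and c d m :: nat
  assumes \<sigma>: "bij_betw \<sigma> {..<d * c} {..<d * c}" and shift: "\<forall>y < d - m. \<sigma> y = (m + y) * c"
    and d: "0 < d" and c: "0 < c" and m: "m \<le> d" "d - m \<le> c" and nonneg: "\<forall>i < d. 0 \<le> f i"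
  defines "g \<equiv> \<lambda>x. if x mod c = 0 then f (x div c) else 0"
  defines "q \<equiv> \<lambda>a. \<Sum>b<c. g (\<sigma> (a * c + b))"
  shows "\<forall>a < d. 0 \<le> q a" and "(\<Sum>a<d. q a) = (\<Sum>i<d. f i)"
    and "(\<Sum>i<d. f i) - (\<Sum>i<m. f i) \<le> q 0"
proof -
  have g: "0 \<le> g (\<sigma> x)" if "x < d * c" for x
    using bij_betwE[OF \<sigma>] that div_mod_less_mult(1)[of "\<sigma> x" d c] nonneg by (auto simp: g_def)
  show "\<forall>a < d. 0 \<le> q a"
    unfolding q_def by (auto intro!: sum_nonneg g simp: mult_add_less_mult)
  have "(\<Sum>a<d. q a) = (\<Sum>x<d * c. g (\<sigma> x))" unfolding q_def sum_lessThan_mult_split ..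
  also have "\<dots> = (\<Sum>x<d * c. g x)" using sum.reindex_bij_betw[OF \<sigma>] .
  finally show "(\<Sum>a<d. q a) = (\<Sum>i<d. f i)" unfolding g_def using sum_first_column[OF c] by simp
  have "(\<Sum>i<d. f i) - (\<Sum>i<m. f i) = (\<Sum>b<d - m. f (m + b))"
    using sum_lessThan_add_split[of f m "d - m"] m(1) by simp
  also have "\<dots> = (\<Sum>b<d - m. g (\<sigma> b))"
    using shift c by (intro sum.cong refl) (simp add: g_def)
  also have "\<dots> \<le> (\<Sum>b<c. g (\<sigma> b))"
  proof (rule sum_mono2)
    have "c \<le> d * c" using d by simp
    then show "\<And>b. b \<in> {..<c} - {..<d - m} \<Longrightarrow> 0 \<le> g (\<sigma> b)"
      using g by (meson DiffD1 lessThan_iff order.strict_trans2)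
  qed (use m(2) in auto)
  also have "\<dots> = q 0" unfolding q_def by simp
  finally show "(\<Sum>i<d. f i) - (\<Sum>i<m. f i) \<le> q 0" .
qed

lemma sum_list_take_eq_sum: "m \<le> length ls \<Longrightarrow> sum_list (take m ls) = (\<Sum>i<m. ls ! i)"
  by (simp add: sum_list_sum_nth lessThan_atLeast0 min_def)

lemma density_mat_eigenvalues:
  assumes \<rho>: "density_mat d \<rho>" and V: "unitary_mat d V" and \<rho>V: "\<rho> = V * real_diag_mat d f * mat_adjoint V"
  shows "\<forall>i < d. 0 \<le> f i" and "(\<Sum>i<d. f i) = 1"
proof -
  show "\<forall>i < d. 0 \<le> f i" using psd_eigenvalue_nonneg[OF _ V \<rho>V] \<rho> unfolding density_mat_def by blast
  have "complex_of_real (\<Sum>i<d. f i) = 1"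
    using \<rho> mtrace_conj_real_diag_mat[OF V] unfolding density_mat_def \<rho>V by simp
  then show "(\<Sum>i<d. f i) = 1" by (simp only: of_real_eq_1_iff)
qed

lemma pc_code_from_spectral_decomp:
  assumes \<rho>: "density_mat d \<rho>" and sd: "spectral_decomp d \<rho> V ls" and d: "0 < d" and c: "0 < c"
    and m: "m \<le> d" "d - m \<le> c"
  shows "\<exists>U. pc_code d \<rho> (2 * sum_list (take m ls)) c d c U"
proof -
  have V: "unitary_mat d V" and l: "length ls = d"
    and \<rho>V: "\<rho> = V * real_diag_mat d (nth ls) * mat_adjoint V"
    using sd unfolding spectral_decomp_def diag_real_eq_real_diag_mat by auto
  note eigenvalues = density_mat_eigenvalues[OF \<rho> V \<rho>V]
  obtain \<sigma> where \<sigma>: "bij_betw \<sigma> {..<d * c} {..<d * c}" and shift: "\<forall>y < d - m. \<sigma> y = (m + y) * c"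
    using grid_shift_permutation[OF m] by blast
  define U where "U = mat_adjoint (perm_mat (d * c) \<sigma>) * tensor_mat (mat_adjoint V) (1\<^sub>m c)"
  define q where "q a = (\<Sum>b<c. if \<sigma> (a * c + b) mod c = 0 then ls ! (\<sigma> (a * c + b) div c) else 0)" for a
  have out: "ptrace2 d c (U * tensor_mat \<rho> (ket0bra0 c) * mat_adjoint U) = real_diag_mat d q"
    unfolding \<rho>V U_def concentration_unitary(2)[OF V \<sigma>] ptrace2_real_diag_mat q_def ..
  note weights = grid_shift_weights[OF \<sigma> shift d c m eigenvalues(1), folded q_def]
  have "(\<Sum>a<d. q a) = 1" by (simp only: weights(2) eigenvalues(2))
  then have "trace_norm d (real_diag_mat d q - ket0bra0 d) = 2 * (1 - q 0)"
    by (rule trace_norm_real_diag_minus_ket0bra0[OF d weights(1)])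
  also have "\<dots> \<le> 2 * sum_list (take m ls)"
    using weights(3) eigenvalues(2) sum_list_take_eq_sum[of m ls] m(1) l by simp
  finally show ?thesis
    unfolding pc_code_def using c d concentration_unitary(1)[OF V \<sigma>] out by (auto simp: U_def)
qed

section \<open>Smoothing and purity\<close>

lemma num_zeroed:
  assumes "0 \<le> eps"
  shows num_zeroed_le_length: "num_zeroed eps ls \<le> length ls"
    and sum_take_num_zeroed_le: "sum_list (take (num_zeroed eps ls) ls) \<le> eps"
    and le_num_zeroed: "\<And>k. k \<le> length ls \<Longrightarrow> sum_list (take k ls) \<le> eps \<Longrightarrow> k \<le> num_zeroed eps ls"
proof -
  let ?P = "\<lambda>m. m \<le> length ls \<and> sum_list (take m ls) \<le> eps"
  have "?P (Greatest ?P)" by (rule GreatestI_nat[of ?P 0 "length ls"]) (use assms in auto)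
  then show "num_zeroed eps ls \<le> length ls" "sum_list (take (num_zeroed eps ls) ls) \<le> eps"
    unfolding num_zeroed_def by auto
  show "k \<le> num_zeroed eps ls" if "k \<le> length ls" "sum_list (take k ls) \<le> eps" for k
    unfolding num_zeroed_def using that by (intro Greatest_le_nat[of ?P k "length ls"]) auto
qed

lemma nth_pos_from_num_zeroed:
  assumes eps: "0 \<le> eps" and sorted: "sorted ls" and i: "num_zeroed eps ls \<le> i" "i < length ls"
  shows "0 < ls ! i"
proof (rule ccontr)
  assume "\<not> 0 < ls ! i"
  have "sum_list (take (Suc i) ls) \<le> 0"
  proof (rule sum_list_nonpos)
    fix x assume "x \<in> set (take (Suc i) ls)"
    then obtain j where "j \<le> i" "x = ls ! j" using i(2) by (auto simp: in_set_conv_nth less_Suc_eq_le)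
    then show "x \<le> 0" using sorted_nth_mono[OF sorted _ i(2)] \<open>\<not> 0 < ls ! i\<close> by fastforce
  qed
  then have "Suc i \<le> num_zeroed eps ls" using le_num_zeroed[OF eps] i(2) eps by simp
  then show False using i(1) by simp
qed

lemma smoothed_op_spectral_decomp:
  assumes "hermitian_mat d \<rho>"
  shows "\<exists>V ls. spectral_decomp d \<rho> V ls \<and> smoothed_op d eps \<rho> =
    V * diag_real (map (\<lambda>i. if i < num_zeroed eps ls then 0 else ls ! i) [0..<d]) * mat_adjoint V"
proof -
  obtain V ls where "spectral_decomp d \<rho> V ls" using spectral_decomp_exists[OF assms] by blast
  then have "\<exists>\<rho>' V ls. spectral_decomp d \<rho> V ls \<and>
    \<rho>' = V * diag_real (map (\<lambda>i. if i < num_zeroed eps ls then 0 else ls ! i) [0..<d]) * mat_adjoint V"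
    by blast
  then show ?thesis unfolding smoothed_op_def by (rule someI_ex)
qed

lemma rank_smoothed_op_ge:
  assumes \<rho>: "density_mat d \<rho>" and eps: "0 \<le> eps"
  shows "\<exists>V ls. spectral_decomp d \<rho> V ls \<and> d - num_zeroed eps ls \<le> vec_space.rank d (smoothed_op d eps \<rho>)"
proof -
  have "hermitian_mat d \<rho>" using \<rho> unfolding density_mat_def psd_mat_def by simp
  then obtain V ls where sd: "spectral_decomp d \<rho> V ls" and sm: "smoothed_op d eps \<rho> =
      V * diag_real (map (\<lambda>i. if i < num_zeroed eps ls then 0 else ls ! i) [0..<d]) * mat_adjoint V"
    using smoothed_op_spectral_decomp by blast
  have V: "unitary_mat d V" and l: "length ls = d" and sorted: "sorted ls"
    using sd unfolding spectral_decomp_def by blast+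
  define m where "m = num_zeroed eps ls"
  have diag: "diag_real (map (\<lambda>i. if i < m then 0 else ls ! i) [0..<d]) =
    real_diag_mat d (\<lambda>i. if i < m then 0 else ls ! i)"
    unfolding diag_real_eq_real_diag_mat length_map length_upt diff_zero
    by (rule real_diag_mat_cong) simp
  have "m \<le> d" using num_zeroed_le_length[OF eps, of ls] l by (simp add: m_def)
  moreover have "ls ! i \<noteq> 0" if "m \<le> i" "i < d" for i
    using nth_pos_from_num_zeroed[OF eps sorted] that l by (fastforce simp: m_def)
  ultimately have "d - m \<le> vec_space.rank d (V * real_diag_mat d (\<lambda>i. if i < m then 0 else ls ! i) * mat_adjoint V)"
    by (intro rank_conj_real_diag_mat_ge[OF V]) auto
  then show ?thesis
    using sd unfolding sm diag[unfolded m_def] by (intro exI[of _ V] exI[of _ ls] conjI) (simp_all add: m_def)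
qed

lemma achievable_le_purity:
  assumes dA: "0 < dA" and r: "achievable dA \<rho> eps r"
  shows "r \<le> purity dA eps \<rho>"
  unfolding purity_def
proof (rule cSup_upper)
  show "bdd_above {r. achievable dA \<rho> eps r}"
  proof (rule bdd_aboveI)
    fix r' assume "r' \<in> {r. achievable dA \<rho> eps r}"
    then obtain dC dP dG U where p: "pc_code dA \<rho> eps dC dP dG U" and r': "r' = log 2 dP - log 2 dC"
      unfolding achievable_def by blast
    have pos: "0 < dC" "0 < dP" "0 < dG" and eq: "dP * dG = dA * dC" using p unfolding pc_code_def by auto
    have "dP \<le> dP * dG" using pos by simp
    then have "real dP \<le> real dA * real dC" unfolding eq by (metis of_nat_le_iff of_nat_mult)
    then have "log 2 dP \<le> log 2 (real dA * real dC)" using pos by (intro log_mono) auto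
    also have "\<dots> = log 2 dA + log 2 dC" using pos dA by (intro log_mult_pos) auto
    finally show "r' \<le> log 2 dA" using r' by simp
  qed
qed (use r in simp)

lemma double_le_three_sqrt:
  fixes x \<epsilon> :: real
  assumes "0 \<le> \<epsilon>" "\<epsilon> \<le> 1" "x \<le> \<epsilon>"
  shows "2 * x \<le> 3 * sqrt \<epsilon>"
proof -
  have "\<epsilon>\<^sup>2 \<le> \<epsilon>" using assms(1,2) by (simp add: power2_eq_square mult_left_le)
  then have "\<epsilon> \<le> sqrt \<epsilon>" by (rule real_le_rsqrt)
  then show ?thesis using assms by simp
qed

lemma log_le_Hmax_supp:
  assumes "d - m \<le> vec_space.rank d (smoothed_op d eps \<rho>)"
  shows "log 2 (real (max (d - m) 1)) \<le> Hmax_supp d eps \<rho>"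
proof (cases "m < d")
  case True
  then show ?thesis unfolding Hmax_supp_def using assms by simp
next
  case False
  then show ?thesis unfolding Hmax_supp_def
    by (cases "vec_space.rank d (smoothed_op d eps \<rho>) = 0") (auto simp: log_def)
qed

theorem theorem1:
  fixes dA :: nat and \<rho> :: "complex mat" and \<epsilon> :: real
  assumes "0 < dA"
    and "density_mat dA \<rho>"
    and "0 \<le> \<epsilon>" and "\<epsilon> \<le> 1"
  shows "purity dA (3 * sqrt \<epsilon>) \<rho> \<ge> log 2 dA - Hmax_supp dA \<epsilon> \<rho>"
proof -
  obtain V ls where sd: "spectral_decomp dA \<rho> V ls"
    and rank: "dA - num_zeroed \<epsilon> ls \<le> vec_space.rank dA (smoothed_op dA \<epsilon> \<rho>)"
    using rank_smoothed_op_ge[OF assms(2,3)] by blast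
  define m where "m = num_zeroed \<epsilon> ls"
  define c where "c = max (dA - m) 1"
  have m: "m \<le> dA" using num_zeroed_le_length[OF assms(3), of ls] sd by (simp add: m_def spectral_decomp_def)
  obtain U where code: "pc_code dA \<rho> (2 * sum_list (take m ls)) c dA c U"
    using pc_code_from_spectral_decomp[OF assms(2) sd assms(1) _ m] by (force simp: c_def)
  have "2 * sum_list (take m ls) \<le> 3 * sqrt \<epsilon>"
    using double_le_three_sqrt[OF assms(3,4) sum_take_num_zeroed_le[OF assms(3)]] by (simp add: m_def)
  then have "achievable dA \<rho> (3 * sqrt \<epsilon>) (log 2 dA - log 2 c)"
    using code unfolding achievable_def pc_code_def by force
  then have "log 2 dA - log 2 c \<le> purity dA (3 * sqrt \<epsilon>) \<rho>" by (rule achievable_le_purity[OF assms(1)])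
  moreover have "log 2 c \<le> Hmax_supp dA \<epsilon> \<rho>"
    unfolding c_def using log_le_Hmax_supp rank by (simp add: m_def)
  ultimately show ?thesis by simp
qed

end
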